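(* Let $(M,\rho)$ be a complete metric space and let $f,g:M\to\mathbb{R}$ be Lipschitz functions such that $f$ is bounded below and $$|\widetilde\nabla f|(x)\ge|\widetilde\nabla g|(x)\qquad\text{for all } x\in M.$$ Then $$\inf_M(f-g)=\inf_{\varepsilon\operatorname{Crit} f}(f-g)\qquad\text{for every }\varepsilon>0.$$
   Context: $[t]^+:=\max\{0,t\}$. The global slope is $|\widetilde\nabla f|(x):=\sup_{y\neq x}\frac{[f(x)-f(y)]^+}{\rho(x,y)}\in[0,+\infty]$. For $\varepsilon\ge0$, $\varepsilon\operatorname{Crit} f:=\{x:\ |\widetilde\nabla f|(x)\le\varepsilon\}=\{x:\ f(y)\ge f(x)-\varepsilon\rho(y,x)\ \forall y\in M\}$. *)

theory Defs
  imports "HOL-Analysis.Analysis"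
begin

definition global_slope :: "('a::metric_space \<Rightarrow> real) \<Rightarrow> 'a \<Rightarrow> ereal" where
  "global_slope f x = Sup (insert 0 {ereal (max 0 (f x - f y) / dist x y) | y. y \<noteq> x})"

definition eps_crit :: "real \<Rightarrow> ('a::metric_space \<Rightarrow> real) \<Rightarrow> 'a set" where
  "eps_crit \<epsilon> f = {x. global_slope f x \<le> ereal \<epsilon>}"

end

theory Submission
  imports Defs
begin

text \<open>
  Fix \<open>0 < \<theta> < 1\<close> and consider the preorder
  \<open>x \<preceq> y \<longleftrightarrow> \<theta> (g x - g y) \<le> f x - f y \<and> \<theta> \<epsilon> \<rho>(x,y) \<le> f x - f y\<close>.
  Since \<open>f\<close> is bounded below and the order cones are closed, the Brezis--Browder
  ordering principle yields, above any \<open>x\<^sub>0\<close>, a point \<open>z\<close> with no strict successor.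
  If \<open>z\<close> were not \<open>\<epsilon>\<close>-critical, a point \<open>y\<close> witnessing a descent of \<open>f\<close> at rate
  \<open>\<theta> |\<nabla>f|(z) > \<theta> \<epsilon>\<close> would satisfy \<open>g z - g y \<le> |\<nabla>g|(z) \<rho>(z,y) \<le> |\<nabla>f|(z) \<rho>(z,y)\<close>,
  hence be a successor of \<open>z\<close>. So \<open>z\<close> is \<open>\<epsilon>\<close>-critical and
  \<open>g x\<^sub>0 - g z \<le> (f x\<^sub>0 - f z) / \<theta>\<close>; letting \<open>\<theta> \<rightarrow> 1\<close>, with \<open>f x\<^sub>0 - f z\<close> bounded,
  gives \<open>(f - g)(z) \<le> (f - g)(x\<^sub>0) + \<eta>\<close> for arbitrary \<open>\<eta> > 0\<close>.
\<close>

lemma ordering_exists_small_cone: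
  fixes R :: "'a::metric_space \<Rightarrow> 'a \<Rightarrow> bool" and F :: "'a \<Rightarrow> real"
  assumes refl: "\<And>x. R x x"
    and trans: "\<And>x y w. R x y \<Longrightarrow> R y w \<Longrightarrow> R x w"
    and bdd: "bdd_below (range F)"
    and dec: "\<And>x y. R x y \<Longrightarrow> lam * dist x y \<le> F x - F y"
    and "e > 0"
  shows "\<exists>y. R x y \<and> (\<forall>w. R y w \<longrightarrow> lam * dist y w < e)"
proof -
  define m where "m = Inf (F ` {y. R x y})"
  have bdd_cone: "bdd_below (F ` {y. R x y})"
    using bdd by (auto intro: bdd_below_mono)
  have "F ` {y. R x y} \<noteq> {}" using refl by auto
  then obtain y where y: "R x y" "F y < m + e"
    using cInf_less_iff[OF _ bdd_cone, of "m + e"] \<open>e > 0\<close> unfolding m_def by auto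
  have "lam * dist y w < e" if "R y w" for w
  proof -
    have "m \<le> F w"
      unfolding m_def using bdd_cone trans[OF y(1) that] by (auto intro: cInf_lower)
    then show ?thesis using dec[OF that] y(2) by linarith
  qed
  with y show ?thesis by blast
qed

lemma ordering_exists_terminal_point:
  fixes R :: "'a::complete_space \<Rightarrow> 'a \<Rightarrow> bool" and F :: "'a \<Rightarrow> real"
  assumes refl: "\<And>x. R x x"
    and trans: "\<And>x y w. R x y \<Longrightarrow> R y w \<Longrightarrow> R x w"
    and closed_cone: "\<And>x. closed {y. R x y}"
    and bdd: "bdd_below (range F)"
    and "lam > 0"
    and dec: "\<And>x y. R x y \<Longrightarrow> lam * dist x y \<le> F x - F y"
  shows "\<exists>z. R x0 z \<and> (\<forall>y. R z y \<longrightarrow> y = z)"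
proof -
  define next_pt where
    "next_pt x n = (SOME y. R x y \<and> (\<forall>w. R y w \<longrightarrow> lam * dist y w < (1/2)^n))" for x n
  have next_pt: "R x (next_pt x n) \<and> (\<forall>w. R (next_pt x n) w \<longrightarrow> lam * dist (next_pt x n) w < (1/2)^n)"
    for x n
    unfolding next_pt_def
    by (rule someI_ex, rule ordering_exists_small_cone[OF refl trans bdd dec]) simp_all
  define xs where "xs = rec_nat x0 (\<lambda>n x. next_pt x n)"
  have xs_0: "xs 0 = x0" and xs_Suc: "xs (Suc n) = next_pt (xs n) n" for n
    by (simp_all add: xs_def)
  define S where "S n = {y. R (xs n) y}" for n
  have S_Suc: "S (Suc n) \<subseteq> S n" for n
    unfolding S_def xs_Suc using trans[OF conjunct1[OF next_pt]] by blast
  have "\<exists>a. \<Inter>(range S) = {a}"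
  proof (rule decreasing_closed_nest_sing)
    show "closed (S n)" for n using closed_cone S_def by simp
    show "S n \<noteq> {}" for n using refl S_def by auto
    show "S n \<subseteq> S m" if "m \<le> n" for m n
      using lift_Suc_antimono_le[of S, OF S_Suc that] by simp
    show "\<exists>n. \<forall>x\<in>S n. \<forall>y\<in>S n. dist x y < e" if "e > 0" for e
    proof -
      obtain n where n: "(1/2::real)^n < e * lam / 2"
        using real_arch_pow_inv[of "e * lam / 2" "1/2"] \<open>e > 0\<close> \<open>lam > 0\<close> by auto
      have "dist x y < e" if "x \<in> S (Suc n)" "y \<in> S (Suc n)" for x y
      proof -
        have close: "lam * dist (xs (Suc n)) w < (1/2)^n" if "w \<in> S (Suc n)" for w
          using next_pt that unfolding S_def xs_Suc by blast
        have "lam * dist x y \<le> lam * dist (xs (Suc n)) x + lam * dist (xs (Suc n)) y"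
          using dist_triangle3[of x y "xs (Suc n)"] \<open>lam > 0\<close>
          by (simp flip: distrib_left)
        then have "lam * dist x y < e * lam" using close[OF that(1)] close[OF that(2)] n by linarith
        then show ?thesis using \<open>lam > 0\<close> by (simp add: mult.commute)
      qed
      then show ?thesis by blast
    qed
  qed
  then obtain a where a: "\<Inter>(range S) = {a}" by blast
  have "y = a" if "R a y" for y
  proof -
    have "a \<in> S n" for n using a by blast
    then have "y \<in> S n" for n using trans that unfolding S_def by blast
    then show ?thesis using a by auto
  qed
  moreover have "R x0 a" using a xs_0 S_def by auto
  ultimately show ?thesis by blast
qed

lemma global_slope_ge_quotient:
  assumes "y \<noteq> x"
  shows "ereal (max 0 (f x - f y) / dist x y) \<le> global_slope f x"
  unfolding global_slope_def by (rule Sup_upper) (use assms in auto)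

lemma global_slope_le_imp_descent_le:
  assumes "global_slope f x \<le> ereal r"
  shows "f x - f y \<le> r * dist x y"
proof (cases "y = x")
  case False
  have "ereal (max 0 (f x - f y) / dist x y) \<le> ereal r"
    using global_slope_ge_quotient[OF False, of f] assms by (rule order_trans)
  then have "max 0 (f x - f y) / dist x y \<le> r" by simp
  then show ?thesis using False by (simp add: divide_le_eq)
qed simp

lemma global_slope_le_lipschitz:
  assumes "L-lipschitz_on UNIV f"
  shows "global_slope f x \<le> ereal (max 0 L)"
  unfolding global_slope_def
proof (rule Sup_least)
  fix v assume "v \<in> insert 0 {ereal (max 0 (f x - f y) / dist x y) |y. y \<noteq> x}"
  then consider "v = 0" | y where "y \<noteq> x" "v = ereal (max 0 (f x - f y) / dist x y)" by auto
  then show "v \<le> ereal (max 0 L)"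
  proof cases
    case 1
    then show ?thesis by (simp add: zero_ereal_def)
  next
    case 2
    have d: "dist x y > 0" using 2 by simp
    have "dist (f x) (f y) \<le> L * dist x y" using assms lipschitz_onD by fastforce
    then have "max 0 (f x - f y) \<le> max 0 L * dist x y"
      using d by (auto simp: dist_real_def abs_le_iff intro: order_trans[OF _ mult_right_mono])
    then have "max 0 (f x - f y) / dist x y \<le> max 0 L" using d by (simp add: divide_le_eq)
    then show ?thesis using 2 ereal_less_eq(3) by metis
  qed
qed

lemma global_slope_lipschitz_finite:
  assumes "L-lipschitz_on UNIV f"
  obtains r where "global_slope f x = ereal r" "r \<ge> 0"
proof -
  have "0 \<le> global_slope f x" unfolding global_slope_def by (rule Sup_upper) simp
  moreover have "global_slope f x \<le> ereal (max 0 L)" using assms by (rule global_slope_le_lipschitz)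
  ultimately show ?thesis
    using that by (cases "global_slope f x") (auto simp del: ereal_max)
qed

lemma global_slope_gt_imp_descent:
  assumes "global_slope f x > ereal c" "c \<ge> 0"
  obtains y where "y \<noteq> x" "f x - f y > c * dist x y"
proof -
  from assms(1) obtain v
    where "v \<in> insert 0 {ereal (max 0 (f x - f y) / dist x y) |y. y \<noteq> x}" "ereal c < v"
    unfolding global_slope_def less_Sup_iff by blast
  then obtain y where y: "y \<noteq> x" "c < max 0 (f x - f y) / dist x y"
    using assms(2) by (auto simp: zero_ereal_def)
  then have "c * dist x y < max 0 (f x - f y)" by (simp add: less_divide_eq)
  moreover have "0 \<le> c * dist x y" using assms(2) by simp
  ultimately show ?thesis using that y(1) by (auto simp: max_def split: if_splits)
qed

lemma exists_eps_crit_weighted_descent: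
  fixes f g :: "'a::complete_space \<Rightarrow> real"
  assumes Lf: "L-lipschitz_on UNIV f" and cont_g: "continuous_on UNIV g"
    and bdd: "bdd_below (range f)"
    and slope: "\<forall>x. global_slope f x \<ge> global_slope g x"
    and "\<epsilon> > 0" "0 < \<theta>" "\<theta> < 1"
  shows "\<exists>z\<in>eps_crit \<epsilon> f. \<theta> * (g x0 - g z) \<le> f x0 - f z"
proof -
  define R where
    "R x y \<longleftrightarrow> \<theta> * (g x - g y) \<le> f x - f y \<and> \<theta> * \<epsilon> * dist x y \<le> f x - f y" for x y
  have cont_f: "continuous_on UNIV f" using Lf by (rule lipschitz_on_continuous_on)
  have "\<exists>z. R x0 z \<and> (\<forall>y. R z y \<longrightarrow> y = z)"
  proof (rule ordering_exists_terminal_point[where F = f and lam = "\<theta> * \<epsilon>"])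
    show "R x w" if "R x y" "R y w" for x y w
    proof -
      have "\<theta> * \<epsilon> * dist x w \<le> \<theta> * \<epsilon> * (dist x y + dist y w)"
        using dist_triangle[of x w y] \<open>0 < \<theta>\<close> \<open>\<epsilon> > 0\<close> by (intro mult_left_mono) auto
      then show ?thesis using that unfolding R_def by (simp add: right_diff_distrib distrib_left)
    qed
    show "closed {y. R x y}" for x
      unfolding R_def by (intro closed_Collect_conj closed_Collect_le continuous_intros cont_f cont_g)
  qed (use bdd \<open>0 < \<theta>\<close> \<open>\<epsilon> > 0\<close> in \<open>auto simp: R_def\<close>)
  then obtain z where z: "R x0 z" "\<And>y. R z y \<Longrightarrow> y = z" by blast
  have "z \<in> eps_crit \<epsilon> f"
  proof (rule ccontr)
    obtain r where r: "global_slope f z = ereal r" "r \<ge> 0"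
      using global_slope_lipschitz_finite[OF Lf] .
    assume "z \<notin> eps_crit \<epsilon> f"
    then have "\<epsilon> < r" using r unfolding eps_crit_def by simp
    then have "global_slope f z > ereal (\<theta> * r)" using r \<open>\<theta> < 1\<close> \<open>\<epsilon> > 0\<close> by simp
    moreover have "\<theta> * r \<ge> 0" using \<open>0 < \<theta>\<close> r(2) by simp
    ultimately obtain y where y: "y \<noteq> z" "f z - f y > \<theta> * r * dist z y"
      by (rule global_slope_gt_imp_descent)
    have "global_slope g z \<le> ereal r" using slope r(1) by metis
    then have "g z - g y \<le> r * dist z y" by (rule global_slope_le_imp_descent_le)
    then have "\<theta> * (g z - g y) \<le> \<theta> * r * dist z y" using \<open>0 < \<theta>\<close> by simp
    moreover have "\<theta> * \<epsilon> * dist z y \<le> \<theta> * r * dist z y"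
      using \<open>\<epsilon> < r\<close> \<open>0 < \<theta>\<close> by (simp add: mult_right_mono)
    ultimately have "R z y" using y unfolding R_def by linarith
    then show False using z y by auto
  qed
  then show ?thesis using z R_def by auto
qed

lemma exists_eps_crit_nearly_below:
  fixes f g :: "'a::complete_space \<Rightarrow> real"
  assumes Lf: "L-lipschitz_on UNIV f" and cont_g: "continuous_on UNIV g"
    and bdd: "bdd_below (range f)"
    and slope: "\<forall>x. global_slope f x \<ge> global_slope g x"
    and "\<epsilon> > 0" "\<eta> > 0"
  shows "\<exists>z\<in>eps_crit \<epsilon> f. f z - g z \<le> f x0 - g x0 + \<eta>"
proof -
  obtain B where B: "\<And>x. B \<le> f x" using bdd unfolding bdd_below_def by auto
  define D where "D = f x0 - B + 1"
  have "D > 0" using B[of x0] unfolding D_def by linarith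
  text \<open>Every \<open>z\<close> has \<open>f x0 - f z < D\<close>, so the weight \<open>\<theta> = D / (D + \<eta>)\<close> costs at most \<open>\<eta>\<close>.\<close>
  define \<theta> where "\<theta> = D / (D + \<eta>)"
  have "0 < \<theta>" "\<theta> < 1" using \<open>D > 0\<close> \<open>\<eta> > 0\<close> by (simp_all add: \<theta>_def)
  then obtain z where z: "z \<in> eps_crit \<epsilon> f" "\<theta> * (g x0 - g z) \<le> f x0 - f z"
    using exists_eps_crit_weighted_descent[OF Lf cont_g bdd slope \<open>\<epsilon> > 0\<close>] by blast
  define a where "a = f x0 - f z"
  have "D * (g x0 - g z) \<le> (D + \<eta>) * a"
    using z(2) \<open>D > 0\<close> \<open>\<eta> > 0\<close> unfolding \<theta>_def a_def by (simp add: field_simps)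
  also have "\<dots> = D * a + \<eta> * a" by (simp add: algebra_simps)
  also have "\<dots> \<le> D * a + \<eta> * D"
    using B[of z] \<open>\<eta> > 0\<close> unfolding a_def D_def by simp
  finally have "D * (g x0 - g z) \<le> D * (a + \<eta>)" by (simp add: algebra_simps)
  then have "g x0 - g z \<le> a + \<eta>" using \<open>D > 0\<close> by simp
  then show ?thesis using z(1) unfolding a_def by force
qed

theorem proposition3p2:
  fixes f g :: "'a::complete_space \<Rightarrow> real"
  assumes "\<exists>L. L-lipschitz_on UNIV f"
    and "\<exists>L. L-lipschitz_on UNIV g"
    and "bdd_below (range f)"
    and "\<forall>x. global_slope f x \<ge> global_slope g x"
    and "\<epsilon> > 0"
  shows "(INF x. ereal (f x - g x)) = (INF x\<in>eps_crit \<epsilon> f. ereal (f x - g x))"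
proof (rule antisym)
  obtain L where Lf: "L-lipschitz_on UNIV f" using assms(1) by blast
  have cont_g: "continuous_on UNIV g" using assms(2) lipschitz_on_continuous_on by blast
  show "(INF x. ereal (f x - g x)) \<le> (INF x\<in>eps_crit \<epsilon> f. ereal (f x - g x))"
    by (rule INF_superset_mono) auto
  show "(INF x\<in>eps_crit \<epsilon> f. ereal (f x - g x)) \<le> (INF x. ereal (f x - g x))"
  proof (rule INF_greatest, rule ereal_le_epsilon2)
    fix x0 and \<eta> :: real
    assume "\<eta> > 0"
    then obtain z where z: "z \<in> eps_crit \<epsilon> f" "f z - g z \<le> f x0 - g x0 + \<eta>"
      using exists_eps_crit_nearly_below[OF Lf cont_g assms(3-5)] by blast
    have "(INF x\<in>eps_crit \<epsilon> f. ereal (f x - g x)) \<le> ereal (f z - g z)"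
      using z(1) by (rule INF_lower)
    also have "\<dots> \<le> ereal (f x0 - g x0) + ereal \<eta>" using z(2) by simp
    finally show "(INF x\<in>eps_crit \<epsilon> f. ereal (f x - g x)) \<le> ereal (f x0 - g x0) + ereal \<eta>" .
  qed
qed

end
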